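(* Let $e\in E_A$. Suppose the monitor state of lifeline $A$ is coherent before evaluating formulas at $e$. Then, for every $\psi\in\mathsf{sub}(\Phi)$, \[ \mathsf{Eval}_A(\psi,e,\mathsf{old}_A)=1 \quad\text{iff}\quad M,e\models\psi . \]
   Context: Setting. $\mathscr L$ is a finite set of lifelines. A message sequence chart (MSC) is $M=(E,\to,\lhd,\mathsf{kind},\mathsf{pid},\mathsf{val})$ with $E$ a finite set of events, $\mathsf{pid}:E\to\mathscr L$, $E_A=\{e\in E\mid \mathsf{pid}(e)=A\}$. The relation $\to$ relates only events on the same lifeline, and for each $A$ its restriction to $E_A$ is the immediate-successor relation of a finite linear order $\leq_A$ (strict version $<_A$). $\mathsf{kind}(e)\in\{\mathsf{act},\mathsf{recv},\mathsf{choice}\}\cup(\{\mathsf{send}\}\times\mathscr L)$. The message relation $\lhd$ is a partial matching: if $s\lhd r$ then $\mathsf{kind}(s)=(\mathsf{send},\mathsf{pid}(r))$, $\mathsf{kind}(r)=\mathsf{recv}$, $\mathsf{pid}(s)\neq\mathsf{pid}(r)$; every receive has exactly one matching send, every send at most one matching receive (not necessarily FIFO). The graph of $\to$ and $\lhd$ edges is acyclic; the causal order $\leq_M$ is its reflexive transitive closure. $\nu_e=\mathsf{val}(e)$ is the valuation (local store of $\mathsf{pid}(e)$ after $e$). $e^B_k$ is the $k$-th event of lifeline $B$ (indexing from 1). Causal Past Logic (CPL): terms $t::=x\mid A.x$ (the value of $x$ at the latest causally visible $A$-event); atoms $\alpha::=p(t_1,\dots,t_n)$; formulas $\varphi::=\alpha\mid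 @_A\varphi\mid \mathsf{Y}\varphi\mid\varphi_1\mathbin{\mathsf{S}}\varphi_2\mid\varphi_1\wedge\varphi_2\mid\varphi_1\vee\varphi_2\mid\neg\varphi$. For $e$ with $\mathsf{pid}(e)=A$: $\mathsf{last}_{\mathsf{loc}}(e)=\max\{f\in E_A\mid f<_A e\}$ and, for any $B$, $\mathsf{last}_B(e)=\max\{f\in E_B\mid f\leq_M e\}$ (when these exist). Term values: $x$ evaluates to $\nu_e(x)$; $A.x$ evaluates to $\nu_{\mathsf{last}_A(e)}(x)$ when defined. An atom is false if any of its terms is undefined; otherwise its truth ($\nu_e\models_M\alpha$) is fixed by the application. $M,e\models\mathsf{Y}\varphi$ iff $\mathsf{last}_{\mathsf{loc}}(e)$ exists and satisfies $\varphi$; $M,e\models @_A\varphi$ iff $\mathsf{last}_A(e)$ exists and satisfies $\varphi$ (non-strict: equals $e$ if $e\in E_A$); for $e\in E_A$, $M,e\models\varphi_1\mathbin{\mathsf{S}}\varphi_2$ iff some $f\in E_A$ with $f\leq_A e$ satisfies $\varphi_2$ and every $g\in E_A$ with $f<_A g\leq_A e$ satisfies $\varphi_1$; Boolean connectives as usual. Monitor. $\Phi$ is a finite set of CPL formulas, $\mathsf{sub}(\Phi)$ its subformulas, $\mathsf{Vars}(\Phi)$ the variable names occurring in terms $B.x$. Each lifeline $A$ keeps: a vector clock $\mathsf{vc}_A:\mathscr L\to\mathbb N$; a partial Boolean view $\mathsf{view}_A:\mathscr L\times\mathsf{sub}(\Phi)\rightharpoonup\{0,1\}$; a partial variable view $\mathsf{var}_A:\mathscr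 L\times\mathsf{Vars}(\Phi)\rightharpoonup\mathsf{Val}$; a local store $\sigma_A$; a total map $\mathsf{old}_A:\mathsf{sub}(\Phi)\to\{0,1\}$. The procedure $\mathsf{Eval}_A(\psi,e,\mathsf{old}_A)$ computes: for an atom $\alpha$, its truth with unqualified variables read from $\sigma_A$ and terms $B.x$ read from $\mathsf{var}_A(B,x)$ (a missing entry makes the atom false); $\mathsf{Y}\theta\mapsto(\mathsf{vc}_A(A)>1)\wedge\mathsf{old}_A(\theta)$; $@_B\theta\mapsto$ $\mathsf{Eval}_A(\theta,e,\mathsf{old}_A)$ if $B=A$, else $0$ if $\mathsf{vc}_A(B)=0$, else $\mathsf{view}_A(B,\theta)$; $\theta_1\mathbin{\mathsf{S}}\theta_2\mapsto \mathsf{Eval}_A(\theta_2,\cdot)\vee(\mathsf{Eval}_A(\theta_1,\cdot)\wedge(\mathsf{vc}_A(A)>1)\wedge\mathsf{old}_A(\theta_1\mathbin{\mathsf{S}}\theta_2))$; $\neg,\wedge,\vee$ computed recursively. Coherence. For $e\in E_A$, the state of $A$ is coherent before evaluating formulas at $e$ if: (i) for every lifeline $B$, $\mathsf{vc}_A(B)=|\{f\in E_B\mid f\leq_M e\}|$; (ii) for every $B\neq A$ with $k=\mathsf{vc}_A(B)>0$, $\mathsf{view}_A(B,\psi)$ is defined and equals $1$ iff $M,e^B_k\models\psi$ for all $\psi\in\mathsf{sub}(\Phi)$, and $\mathsf{var}_A(B,x)=\mathsf{val}(e^B_k)(x)$ for all $x\in\mathsf{Vars}(\Phi)$; if $\mathsf{vc}_A(B)=0$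 all entries for $B$ are absent; (iii) $\sigma_A(x)=\mathsf{val}(e)(x)$ for every monitored unqualified variable $x$, and $\mathsf{var}_A(A,x)$ is defined and equal to $\mathsf{val}(e)(x)$ for every $x\in\mathsf{Vars}(\Phi)$ (no condition on $\mathsf{view}_A(A,\cdot)$); (iv) for every $\psi\in\mathsf{sub}(\Phi)$, $\mathsf{old}_A(\psi)$ is the truth value of $\psi$ at the previous local event of $A$ if it exists, and false otherwise. *)

theory Defs
  imports Main
begin

datatype 'l ekind = Act | Recv | Choice | Send 'l

record ('e, 'l, 'x, 'v) msc =
  events :: "'e set"
  succ   :: "'e \<Rightarrow> 'e \<Rightarrow> bool"
  msg    :: "'e \<Rightarrow> 'e \<Rightarrow> bool"
  kind   :: "'e \<Rightarrow> 'l ekind"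
  pid    :: "'e \<Rightarrow> 'l"
  val    :: "'e \<Rightarrow> 'x \<Rightarrow> 'v"

definition E_of :: "('e, 'l, 'x, 'v) msc \<Rightarrow> 'l \<Rightarrow> 'e set" where
  "E_of M A = {e \<in> events M. pid M e = A}"

definition wf_msc :: "('e, 'l, 'x, 'v) msc \<Rightarrow> bool" where
  "wf_msc M \<longleftrightarrow>
     finite (events M) \<and>
     (\<forall>e f. succ M e f \<longrightarrow> e \<in> events M \<and> f \<in> events M \<and> pid M e = pid M f) \<and>
     (\<forall>A. \<exists>le. (\<forall>e\<in>E_of M A. le e e) \<and>
               (\<forall>e\<in>E_of M A. \<forall>f\<in>E_of M A. le e f \<and> le f e \<longrightarrow> e = f) \<and>
               (\<forall>e\<in>E_of M A. \<forall>f\<in>E_of M A. \<forall>g\<in>E_of M A. le e f \<and> le f g \<longrightarrow> le e g) \<and>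
               (\<forall>e\<in>E_of M A. \<forall>f\<in>E_of M A. le e f \<or> le f e) \<and>
               (\<forall>e\<in>E_of M A. \<forall>f\<in>E_of M A. succ M e f \<longleftrightarrow>
                  (le e f \<and> e \<noteq> f \<and> \<not> (\<exists>g\<in>E_of M A. le e g \<and> le g f \<and> g \<noteq> e \<and> g \<noteq> f)))) \<and>
     (\<forall>s r. msg M s r \<longrightarrow> s \<in> events M \<and> r \<in> events M \<and>
              kind M s = Send (pid M r) \<and> kind M r = Recv \<and> pid M s \<noteq> pid M r) \<and>
     (\<forall>r\<in>events M. kind M r = Recv \<longrightarrow> (\<exists>!s. msg M s r)) \<and>
     (\<forall>s r r'. msg M s r \<and> msg M s r' \<longrightarrow> r = r') \<and>
     (\<forall>e. \<not> (\<lambda>a b. succ M a b \<or> msg M a b)\<^sup>+\<^sup>+ e e)"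

definition loc_le :: "('e, 'l, 'x, 'v) msc \<Rightarrow> 'e \<Rightarrow> 'e \<Rightarrow> bool" where
  "loc_le M e f \<longleftrightarrow> e \<in> events M \<and> f \<in> events M \<and> pid M e = pid M f \<and> (succ M)\<^sup>*\<^sup>* e f"

definition loc_lt :: "('e, 'l, 'x, 'v) msc \<Rightarrow> 'e \<Rightarrow> 'e \<Rightarrow> bool" where
  "loc_lt M e f \<longleftrightarrow> loc_le M e f \<and> e \<noteq> f"

definition causal_le :: "('e, 'l, 'x, 'v) msc \<Rightarrow> 'e \<Rightarrow> 'e \<Rightarrow> bool" where
  "causal_le M e f \<longleftrightarrow> e \<in> events M \<and> f \<in> events M \<and> (\<lambda>a b. succ M a b \<or> msg M a b)\<^sup>*\<^sup>* e f"

definition last_loc :: "('e, 'l, 'x, 'v) msc \<Rightarrow> 'e \<Rightarrow> 'e option" where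
  "last_loc M e = (if \<exists>f. loc_lt M f e
      then Some (THE f. loc_lt M f e \<and> (\<forall>g. loc_lt M g e \<longrightarrow> loc_le M g f))
      else None)"

definition last_on :: "('e, 'l, 'x, 'v) msc \<Rightarrow> 'l \<Rightarrow> 'e \<Rightarrow> 'e option" where
  "last_on M B e = (if \<exists>f\<in>E_of M B. causal_le M f e
      then Some (THE f. f \<in> E_of M B \<and> causal_le M f e \<and>
                   (\<forall>g\<in>E_of M B. causal_le M g e \<longrightarrow> loc_le M g f))
      else None)"

text \<open>\<open>e^B_k\<close>: the \<open>k\<close>-th event of lifeline \<open>B\<close> (indexing from 1).\<close>
definition nth_event :: "('e, 'l, 'x, 'v) msc \<Rightarrow> 'l \<Rightarrow> nat \<Rightarrow> 'e" where
  "nth_event M B k = (THE f. f \<in> E_of M B \<and> card {g \<in> E_of M B. loc_le M g f} = k)"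

datatype ('l, 'x) cpl_term = Loc 'x | Qual 'l 'x

datatype ('l, 'x, 'p) cpl =
    Atom 'p "('l, 'x) cpl_term list"
  | At 'l "('l, 'x, 'p) cpl"
  | Yest "('l, 'x, 'p) cpl"
  | Since "('l, 'x, 'p) cpl" "('l, 'x, 'p) cpl"
  | Conj "('l, 'x, 'p) cpl" "('l, 'x, 'p) cpl"
  | Disj "('l, 'x, 'p) cpl" "('l, 'x, 'p) cpl"
  | Neg "('l, 'x, 'p) cpl"

fun term_val :: "('e, 'l, 'x, 'v) msc \<Rightarrow> 'e \<Rightarrow> ('l, 'x) cpl_term \<Rightarrow> 'v option" where
  "term_val M e (Loc x) = Some (val M e x)"
| "term_val M e (Qual A x) = map_option (\<lambda>f. val M f x) (last_on M A e)"

primrec sat :: "('e, 'l, 'x, 'v) msc \<Rightarrow> ('p \<Rightarrow> 'v list \<Rightarrow> bool) \<Rightarrow> ('l, 'x, 'p) cpl \<Rightarrow> 'e \<Rightarrow> bool" where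
  "sat M I (Atom p ts) e \<longleftrightarrow>
     (\<forall>t\<in>set ts. term_val M e t \<noteq> None) \<and> I p (map (\<lambda>t. the (term_val M e t)) ts)"
| "sat M I (At A \<phi>) e \<longleftrightarrow> (case last_on M A e of Some f \<Rightarrow> sat M I \<phi> f | None \<Rightarrow> False)"
| "sat M I (Yest \<phi>) e \<longleftrightarrow> (case last_loc M e of Some f \<Rightarrow> sat M I \<phi> f | None \<Rightarrow> False)"
| "sat M I (Since \<phi>1 \<phi>2) e \<longleftrightarrow>
     (\<exists>f. loc_le M f e \<and> sat M I \<phi>2 f \<and> (\<forall>g. loc_lt M f g \<and> loc_le M g e \<longrightarrow> sat M I \<phi>1 g))"
| "sat M I (Conj \<phi>1 \<phi>2) e \<longleftrightarrow> sat M I \<phi>1 e \<and> sat M I \<phi>2 e"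
| "sat M I (Disj \<phi>1 \<phi>2) e \<longleftrightarrow> sat M I \<phi>1 e \<or> sat M I \<phi>2 e"
| "sat M I (Neg \<phi>) e \<longleftrightarrow> \<not> sat M I \<phi> e"

primrec sub :: "('l, 'x, 'p) cpl \<Rightarrow> ('l, 'x, 'p) cpl set" where
  "sub (Atom p ts) = {Atom p ts}"
| "sub (At A \<phi>) = insert (At A \<phi>) (sub \<phi>)"
| "sub (Yest \<phi>) = insert (Yest \<phi>) (sub \<phi>)"
| "sub (Since \<phi>1 \<phi>2) = insert (Since \<phi>1 \<phi>2) (sub \<phi>1 \<union> sub \<phi>2)"
| "sub (Conj \<phi>1 \<phi>2) = insert (Conj \<phi>1 \<phi>2) (sub \<phi>1 \<union> sub \<phi>2)"
| "sub (Disj \<phi>1 \<phi>2) = insert (Disj \<phi>1 \<phi>2) (sub \<phi>1 \<union> sub \<phi>2)"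
| "sub (Neg \<phi>) = insert (Neg \<phi>) (sub \<phi>)"

definition subs :: "('l, 'x, 'p) cpl set \<Rightarrow> ('l, 'x, 'p) cpl set" where
  "subs \<Phi> = (\<Union>\<phi>\<in>\<Phi>. sub \<phi>)"

text \<open>\<open>Vars(\<Phi>)\<close>: variable names occurring in qualified terms \<open>B.x\<close>.\<close>
definition QVars :: "('l, 'x, 'p) cpl set \<Rightarrow> 'x set" where
  "QVars \<Phi> = {x. \<exists>p ts B. Atom p ts \<in> subs \<Phi> \<and> Qual B x \<in> set ts}"

definition LVars :: "('l, 'x, 'p) cpl set \<Rightarrow> 'x set" where
  "LVars \<Phi> = {x. \<exists>p ts. Atom p ts \<in> subs \<Phi> \<and> Loc x \<in> set ts}"

record ('l, 'x, 'v, 'p) mstate =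
  vc    :: "'l \<Rightarrow> nat"
  view  :: "'l \<Rightarrow> ('l, 'x, 'p) cpl \<Rightarrow> bool option"
  vars  :: "'l \<Rightarrow> 'x \<Rightarrow> 'v option"
  store :: "'x \<Rightarrow> 'v"
  old   :: "('l, 'x, 'p) cpl \<Rightarrow> bool"

fun mterm_val :: "('l, 'x, 'v, 'p) mstate \<Rightarrow> ('l, 'x) cpl_term \<Rightarrow> 'v option" where
  "mterm_val st (Loc x) = Some (store st x)"
| "mterm_val st (Qual B x) = vars st B x"

text \<open>\<open>Eval_A(\<psi>, e, old_A)\<close>; the event \<open>e\<close> is not consulted by the procedure, and
  \<open>old_A\<close> is passed explicitly.\<close>
primrec Eval :: "'l \<Rightarrow> ('p \<Rightarrow> 'v list \<Rightarrow> bool) \<Rightarrow> ('l, 'x, 'v, 'p) mstate \<Rightarrow>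
                 (('l, 'x, 'p) cpl \<Rightarrow> bool) \<Rightarrow> ('l, 'x, 'p) cpl \<Rightarrow> bool" where
  "Eval A I st oldf (Atom p ts) \<longleftrightarrow>
     (\<forall>t\<in>set ts. mterm_val st t \<noteq> None) \<and> I p (map (\<lambda>t. the (mterm_val st t)) ts)"
| "Eval A I st oldf (Yest \<theta>) \<longleftrightarrow> vc st A > 1 \<and> oldf \<theta>"
| "Eval A I st oldf (At B \<theta>) \<longleftrightarrow>
     (if B = A then Eval A I st oldf \<theta>
      else if vc st B = 0 then False else view st B \<theta> = Some True)"
| "Eval A I st oldf (Since \<theta>1 \<theta>2) \<longleftrightarrow>
     Eval A I st oldf \<theta>2 \<or> (Eval A I st oldf \<theta>1 \<and> vc st A > 1 \<and> oldf (Since \<theta>1 \<theta>2))"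
| "Eval A I st oldf (Conj \<theta>1 \<theta>2) \<longleftrightarrow> Eval A I st oldf \<theta>1 \<and> Eval A I st oldf \<theta>2"
| "Eval A I st oldf (Disj \<theta>1 \<theta>2) \<longleftrightarrow> Eval A I st oldf \<theta>1 \<or> Eval A I st oldf \<theta>2"
| "Eval A I st oldf (Neg \<theta>) \<longleftrightarrow> \<not> Eval A I st oldf \<theta>"

definition coherent ::
  "('e, 'l, 'x, 'v) msc \<Rightarrow> ('p \<Rightarrow> 'v list \<Rightarrow> bool) \<Rightarrow> ('l, 'x, 'p) cpl set \<Rightarrow>
   'l \<Rightarrow> ('l, 'x, 'v, 'p) mstate \<Rightarrow> 'e \<Rightarrow> bool" where
  "coherent M I \<Phi> A st e \<longleftrightarrow>
     (\<forall>B. vc st B = card {f \<in> E_of M B. causal_le M f e}) \<and>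
     (\<forall>B. B \<noteq> A \<longrightarrow>
        (vc st B > 0 \<longrightarrow>
           (\<forall>\<psi>\<in>subs \<Phi>. view st B \<psi> = Some (sat M I \<psi> (nth_event M B (vc st B)))) \<and>
           (\<forall>x\<in>QVars \<Phi>. vars st B x = Some (val M (nth_event M B (vc st B)) x))) \<and>
        (vc st B = 0 \<longrightarrow>
           (\<forall>\<psi>\<in>subs \<Phi>. view st B \<psi> = None) \<and> (\<forall>x\<in>QVars \<Phi>. vars st B x = None))) \<and>
     (\<forall>x\<in>LVars \<Phi>. store st x = val M e x) \<and>
     (\<forall>x\<in>QVars \<Phi>. vars st A x = Some (val M e x)) \<and>
     (\<forall>\<psi>\<in>subs \<Phi>. old st \<psi> = (case last_loc M e of Some f \<Rightarrow> sat M I \<psi> f | None \<Rightarrow> False))"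

end

theory Submission
  imports Defs
begin

(* Coherence makes every piece of monitor data the
   semantic object it stands for: vc_A(B) is the size of the causal past of e on lifeline B,
   which is an initial segment of the local order of B, so e^B_(vc_A(B)) is last_B(e), and the
   views and variable copies of B describe that event; e is its own latest A-event, so @_A and
   the terms A.x are evaluated locally. The past operators reduce, through old_A, to the
   previous local event via the expansion law  phi S psi = psi | (phi & Y (phi S psi)), and
   the guard vc_A(A) > 1 holds exactly when that event exists. *)

lemma rtranclp_cover_if_le:
  assumes fin: "finite E"
    and refl: "\<forall>e\<in>E. le e e"
    and antisym: "\<forall>e\<in>E. \<forall>f\<in>E. le e f \<and> le f e \<longrightarrow> e = f"
    and trans: "\<forall>e\<in>E. \<forall>f\<in>E. \<forall>g\<in>E. le e f \<and> le f g \<longrightarrow> le e g"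
    and cover: "\<forall>e\<in>E. \<forall>f\<in>E. S e f \<longleftrightarrow>
                  (le e f \<and> e \<noteq> f \<and> \<not> (\<exists>g\<in>E. le e g \<and> le g f \<and> g \<noteq> e \<and> g \<noteq> f))"
  shows "e \<in> E \<Longrightarrow> f \<in> E \<Longrightarrow> le e f \<Longrightarrow> S\<^sup>*\<^sup>* e f"
proof (induction "card {g\<in>E. le e g \<and> le g f}" arbitrary: e f rule: less_induct)
  case less
  have smaller: "card {x\<in>E. le a x \<and> le x b} < card {x\<in>E. le e x \<and> le x f}"
    if ab: "a \<in> E" "b \<in> E" "le e a" "le b f" "a \<noteq> e \<or> b \<noteq> f" for a b
  proof (rule psubset_card_mono)
    show "finite {x\<in>E. le e x \<and> le x f}" using fin by simp
    have "{x\<in>E. le a x \<and> le x b} \<subseteq> {x\<in>E. le e x \<and> le x f}"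
      using ab less.prems trans by blast
    moreover have "e \<notin> {x\<in>E. le a x \<and> le x b} \<or> f \<notin> {x\<in>E. le a x \<and> le x b}"
      using ab less.prems antisym by blast
    moreover have "e \<in> {x\<in>E. le e x \<and> le x f}" "f \<in> {x\<in>E. le e x \<and> le x f}"
      using less.prems refl by auto
    ultimately show "{x\<in>E. le a x \<and> le x b} \<subset> {x\<in>E. le e x \<and> le x f}" by blast
  qed
  show ?case
  proof (cases "e = f \<or> S e f")
    case False
    then obtain g where g: "g \<in> E" "le e g" "le g f" "g \<noteq> e" "g \<noteq> f"
      using cover less.prems by blast
    have "S\<^sup>*\<^sup>* e g"
      using less.hyps[OF smaller] g less.prems refl by blast
    moreover have "S\<^sup>*\<^sup>* g f"
      using less.hyps[OF smaller] g less.prems refl by blast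
    ultimately show ?thesis by (rule rtranclp_trans)
  qed auto
qed

lemma wf_msc_finite_events: "wf_msc M \<Longrightarrow> finite (events M)"
  by (simp add: wf_msc_def)

lemma finite_E_of: "wf_msc M \<Longrightarrow> finite (E_of M B)"
  by (simp add: E_of_def wf_msc_finite_events)

lemma wf_msc_acyclic: "wf_msc M \<Longrightarrow> \<not> (\<lambda>a b. succ M a b \<or> msg M a b)\<^sup>+\<^sup>+ e e"
  by (simp add: wf_msc_def)

lemma rtranclp_succ_imp_causal: "(succ M)\<^sup>*\<^sup>* a b \<Longrightarrow> (\<lambda>a b. succ M a b \<or> msg M a b)\<^sup>*\<^sup>* a b"
  by (induction rule: rtranclp_induct) (auto intro: rtranclp.rtrancl_into_rtrancl)

lemma causal_le_refl: "e \<in> events M \<Longrightarrow> causal_le M e e"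
  unfolding causal_le_def by simp

lemma causal_le_trans: "causal_le M a b \<Longrightarrow> causal_le M b c \<Longrightarrow> causal_le M a c"
  unfolding causal_le_def by (meson rtranclp_trans)

lemma causal_le_antisym:
  assumes "wf_msc M" "causal_le M a b" "causal_le M b a"
  shows "a = b"
proof (rule ccontr)
  let ?R = "\<lambda>a b. succ M a b \<or> msg M a b"
  assume "a \<noteq> b"
  with assms have "?R\<^sup>+\<^sup>+ a b" "?R\<^sup>*\<^sup>* b a"
    unfolding causal_le_def by (auto dest: rtranclpD)
  then have "?R\<^sup>+\<^sup>+ a a" by (rule tranclp_rtranclp_tranclp)
  with wf_msc_acyclic[OF assms(1)] show False by blast
qed

lemma loc_le_imp_causal_le: "loc_le M a b \<Longrightarrow> causal_le M a b"
  unfolding loc_le_def causal_le_def using rtranclp_succ_imp_causal by fast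

lemma loc_le_refl: "e \<in> events M \<Longrightarrow> loc_le M e e"
  unfolding loc_le_def by simp

lemma loc_le_trans: "loc_le M a b \<Longrightarrow> loc_le M b c \<Longrightarrow> loc_le M a c"
  unfolding loc_le_def by (metis rtranclp_trans)

lemma loc_le_antisym: "wf_msc M \<Longrightarrow> loc_le M a b \<Longrightarrow> loc_le M b a \<Longrightarrow> a = b"
  by (metis causal_le_antisym loc_le_imp_causal_le)

lemma loc_le_E_of: "loc_le M a b \<Longrightarrow> a \<in> E_of M (pid M b) \<and> b \<in> E_of M (pid M b)"
  unfolding loc_le_def E_of_def by auto

text \<open>\<open>wf_msc\<close> only provides some linear order on each lifeline whose covering relation is
  \<open>succ\<close>; on a finite set such an order is generated by its covering relation.\<close>
lemma loc_le_total:
  assumes wf: "wf_msc M" and "a \<in> E_of M A" "b \<in> E_of M A"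
  shows "loc_le M a b \<or> loc_le M b a"
proof -
  obtain le where
    refl: "\<forall>e\<in>E_of M A. le e e" and
    antisym: "\<forall>e\<in>E_of M A. \<forall>f\<in>E_of M A. le e f \<and> le f e \<longrightarrow> e = f" and
    trans: "\<forall>e\<in>E_of M A. \<forall>f\<in>E_of M A. \<forall>g\<in>E_of M A. le e f \<and> le f g \<longrightarrow> le e g" and
    total: "\<forall>e\<in>E_of M A. \<forall>f\<in>E_of M A. le e f \<or> le f e" and
    cover: "\<forall>e\<in>E_of M A. \<forall>f\<in>E_of M A. succ M e f \<longleftrightarrow>
      (le e f \<and> e \<noteq> f \<and> \<not> (\<exists>g\<in>E_of M A. le e g \<and> le g f \<and> g \<noteq> e \<and> g \<noteq> f))"
    using wf unfolding wf_msc_def by (elim conjE) (drule spec[of _ A], elim exE conjE)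
  from total assms(2,3) have "le a b \<or> le b a" by blast
  then have "(succ M)\<^sup>*\<^sup>* a b \<or> (succ M)\<^sup>*\<^sup>* b a"
    using rtranclp_cover_if_le[OF finite_E_of[OF wf] refl antisym trans cover] assms(2,3)
    by blast
  with assms show ?thesis unfolding loc_le_def E_of_def by auto
qed

lemma card_loc_downset_strict_mono:
  assumes wf: "wf_msc M" and f': "f' \<in> E_of M B" and le: "loc_le M f f'" and "f \<noteq> f'"
  shows "card {g\<in>E_of M B. loc_le M g f} < card {g\<in>E_of M B. loc_le M g f'}"
proof (rule psubset_card_mono)
  show "finite {g\<in>E_of M B. loc_le M g f'}" using finite_E_of[OF wf] by simp
  have "{g\<in>E_of M B. loc_le M g f} \<subseteq> {g\<in>E_of M B. loc_le M g f'}"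
    using loc_le_trans[OF _ le] by blast
  moreover have "f' \<in> {g\<in>E_of M B. loc_le M g f'}"
    using f' loc_le_refl[of f' M] by (simp add: E_of_def)
  moreover have "f' \<notin> {g\<in>E_of M B. loc_le M g f}"
    using loc_le_antisym[OF wf le] \<open>f \<noteq> f'\<close> by blast
  ultimately show "{g\<in>E_of M B. loc_le M g f} \<subset> {g\<in>E_of M B. loc_le M g f'}" by blast
qed

lemma card_loc_downset_inj:
  assumes wf: "wf_msc M" and f: "f \<in> E_of M B" and f': "f' \<in> E_of M B"
    and eq: "card {g\<in>E_of M B. loc_le M g f} = card {g\<in>E_of M B. loc_le M g f'}"
  shows "f = f'"
proof (rule ccontr)
  assume ne: "f \<noteq> f'"
  from loc_le_total[OF wf f f'] show False
  proof
    assume "loc_le M f f'"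
    with card_loc_downset_strict_mono[OF wf f' _ ne] eq show False by simp
  next
    assume "loc_le M f' f"
    with card_loc_downset_strict_mono[OF wf f _ ne[symmetric]] eq show False by simp
  qed
qed

lemma nth_event_card_loc_downset:
  assumes "wf_msc M" and "m \<in> E_of M B"
  shows "nth_event M B (card {g\<in>E_of M B. loc_le M g m}) = m"
  unfolding nth_event_def
  by (rule the_equality) (use assms card_loc_downset_inj[OF assms(1) _ assms(2)] in auto)

lemma ex_loc_greatest:
  assumes wf: "wf_msc M" and S: "S \<subseteq> E_of M B" and "S \<noteq> {}"
  shows "\<exists>m\<in>S. \<forall>g\<in>S. loc_le M g m"
proof -
  let ?index = "\<lambda>f. card {g\<in>E_of M B. loc_le M g f}"
  obtain f where "f \<in> S" using assms by blast
  moreover have "?index g < Suc (card (E_of M B))" for g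
    using finite_E_of[OF wf] by (simp add: le_imp_less_Suc card_mono)
  ultimately obtain m where m: "m \<in> S" and greatest: "\<And>g. g \<in> S \<Longrightarrow> ?index g \<le> ?index m"
    using Lattices_Big.ex_has_greatest_nat[of "\<lambda>f. f \<in> S" f ?index] by blast
  have "loc_le M g m" if g: "g \<in> S" for g
  proof (rule ccontr)
    assume "\<not> loc_le M g m"
    moreover have "g \<in> E_of M B" "m \<in> E_of M B" using g m S by auto
    ultimately have "loc_le M m g" "m \<noteq> g"
      using loc_le_total[OF wf] loc_le_refl unfolding E_of_def by blast+
    then have "?index m < ?index g"
      using card_loc_downset_strict_mono[OF wf \<open>g \<in> E_of M B\<close>] by blast
    with greatest[OF g] show False by simp
  qed
  with m show ?thesis by blast
qed

lemma last_loc_eq_Some_iff: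
  assumes wf: "wf_msc M"
  shows "last_loc M e = Some p \<longleftrightarrow> loc_lt M p e \<and> (\<forall>g. loc_lt M g e \<longrightarrow> loc_le M g p)"
proof -
  have unique: "(THE f. loc_lt M f e \<and> (\<forall>g. loc_lt M g e \<longrightarrow> loc_le M g f)) = m"
    if "loc_lt M m e \<and> (\<forall>g. loc_lt M g e \<longrightarrow> loc_le M g m)" for m
  proof (rule the_equality)
    fix f assume "loc_lt M f e \<and> (\<forall>g. loc_lt M g e \<longrightarrow> loc_le M g f)"
    with that show "f = m" using loc_le_antisym[OF wf, of f m] by blast
  qed (use that in simp)
  show ?thesis
  proof
    assume last: "last_loc M e = Some p"
    then have ex: "\<exists>f. loc_lt M f e" by (auto simp: last_loc_def split: if_splits)
    have "{f. loc_lt M f e} \<subseteq> E_of M (pid M e)"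
      unfolding loc_lt_def by (auto dest: loc_le_E_of)
    then obtain m where "m \<in> {f. loc_lt M f e}" "\<forall>g\<in>{f. loc_lt M f e}. loc_le M g m"
      using ex_loc_greatest[OF wf] ex by blast
    then have m: "loc_lt M m e \<and> (\<forall>g. loc_lt M g e \<longrightarrow> loc_le M g m)" by simp
    then have "last_loc M e = Some m"
      unfolding last_loc_def using ex unique by simp
    with last m show "loc_lt M p e \<and> (\<forall>g. loc_lt M g e \<longrightarrow> loc_le M g p)" by simp
  next
    assume p: "loc_lt M p e \<and> (\<forall>g. loc_lt M g e \<longrightarrow> loc_le M g p)"
    then have "\<exists>f. loc_lt M f e" by blast
    with p unique show "last_loc M e = Some p" unfolding last_loc_def by simp
  qed
qed

lemma loc_le_iff_last_loc:
  assumes wf: "wf_msc M" and e: "e \<in> events M"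
  shows "loc_le M g e \<longleftrightarrow> g = e \<or> (case last_loc M e of Some p \<Rightarrow> loc_le M g p | None \<Rightarrow> False)"
proof (cases "last_loc M e")
  case None
  then have "\<not> loc_lt M g e" by (simp add: last_loc_def split: if_splits)
  with None loc_le_refl[OF e] show ?thesis unfolding loc_lt_def by auto
next
  case (Some p)
  then have "loc_lt M p e" "\<forall>g. loc_lt M g e \<longrightarrow> loc_le M g p"
    by (simp_all add: last_loc_eq_Some_iff[OF wf])
  then have "loc_le M g e \<longleftrightarrow> g = e \<or> loc_le M g p"
    using loc_le_trans[of M g p e] loc_le_refl[OF e] unfolding loc_lt_def by blast
  with Some show ?thesis by simp
qed

lemma sat_Since_unfold:
  assumes wf: "wf_msc M" and e: "e \<in> events M"
  shows "sat M I (Since \<phi> \<psi>) e \<longleftrightarrow> sat M I \<psi> e \<or>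
    (sat M I \<phi> e \<and> (case last_loc M e of Some p \<Rightarrow> sat M I (Since \<phi> \<psi>) p | None \<Rightarrow> False))"
proof -
  have nothing_after: "\<not> (loc_lt M e g \<and> loc_le M g e)" for g
    using loc_le_antisym[OF wf] unfolding loc_lt_def by blast
  have now: "sat M I (Since \<phi> \<psi>) e" if "sat M I \<psi> e"
    unfolding sat.simps using that loc_le_refl[OF e] nothing_after by blast
  show ?thesis
  proof (cases "last_loc M e")
    case None
    then have "loc_le M g e \<longleftrightarrow> g = e" for g
      using loc_le_iff_last_loc[OF wf e] by simp
    with None now show ?thesis unfolding sat.simps by (simp only: option.case) blast
  next
    case (Some p)
    then have past: "loc_le M g e \<longleftrightarrow> g = e \<or> loc_le M g p" for g
      using loc_le_iff_last_loc[OF wf e] by simp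
    have "sat M I (Since \<phi> \<psi>) e \<longleftrightarrow>
        sat M I \<psi> e \<or> (sat M I \<phi> e \<and> sat M I (Since \<phi> \<psi>) p)"
    proof
      assume "sat M I (Since \<phi> \<psi>) e"
      then obtain f where f: "loc_le M f e" "sat M I \<psi> f"
        and between: "\<forall>g. loc_lt M f g \<and> loc_le M g e \<longrightarrow> sat M I \<phi> g"
        unfolding sat.simps by blast
      show "sat M I \<psi> e \<or> (sat M I \<phi> e \<and> sat M I (Since \<phi> \<psi>) p)"
      proof (cases "f = e")
        case False
        then have "loc_le M f p" "loc_lt M f e"
          using f(1) past unfolding loc_lt_def by blast+
        then have "sat M I \<phi> e" using between loc_le_refl[OF e] by blast
        moreover have "sat M I (Since \<phi> \<psi>) p"
          unfolding sat.simps using \<open>loc_le M f p\<close> f(2) between past by blast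
        ultimately show ?thesis by blast
      qed (use f in simp)
    next
      assume "sat M I \<psi> e \<or> (sat M I \<phi> e \<and> sat M I (Since \<phi> \<psi>) p)"
      then show "sat M I (Since \<phi> \<psi>) e"
      proof
        assume "sat M I \<phi> e \<and> sat M I (Since \<phi> \<psi>) p"
        then obtain f where "sat M I \<phi> e" "loc_le M f p" "sat M I \<psi> f"
          "\<forall>g. loc_lt M f g \<and> loc_le M g p \<longrightarrow> sat M I \<phi> g"
          unfolding sat.simps by blast
        then show ?thesis unfolding sat.simps past by blast
      qed (rule now)
    qed
    with Some show ?thesis by simp
  qed
qed

lemma last_on_eq_Some:
  assumes wf: "wf_msc M" and m: "m \<in> E_of M B" "causal_le M m e"
    and greatest: "\<forall>g\<in>E_of M B. causal_le M g e \<longrightarrow> loc_le M g m"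
  shows "last_on M B e = Some m"
proof -
  have "(THE f. f \<in> E_of M B \<and> causal_le M f e \<and>
      (\<forall>g\<in>E_of M B. causal_le M g e \<longrightarrow> loc_le M g f)) = m"
  proof (rule the_equality)
    fix f assume "f \<in> E_of M B \<and> causal_le M f e \<and> (\<forall>g\<in>E_of M B. causal_le M g e \<longrightarrow> loc_le M g f)"
    with m greatest show "f = m" using loc_le_antisym[OF wf, of f m] by blast
  qed (use m greatest in simp)
  moreover have "\<exists>f\<in>E_of M B. causal_le M f e" using m by blast
  ultimately show ?thesis unfolding last_on_def by simp
qed

lemma last_on_self:
  assumes wf: "wf_msc M" and e: "e \<in> E_of M A"
  shows "last_on M A e = Some e"
proof (rule last_on_eq_Some[OF wf e])
  have e_ev: "e \<in> events M" using e by (simp add: E_of_def)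
  then show "causal_le M e e" by (rule causal_le_refl)
  show "\<forall>g\<in>E_of M A. causal_le M g e \<longrightarrow> loc_le M g e"
  proof (intro ballI impI)
    fix g assume g: "g \<in> E_of M A" "causal_le M g e"
    from loc_le_total[OF wf g(1) e] show "loc_le M g e"
    proof
      assume "loc_le M e g"
      then have "g = e" by (rule causal_le_antisym[OF wf g(2) loc_le_imp_causal_le])
      with e_ev show ?thesis by (simp add: loc_le_refl)
    qed
  qed
qed

text \<open>The causal past of \<open>e\<close> on lifeline \<open>B\<close> is an initial segment of \<open>B\<close>, so its
  size is the index of its last event.\<close>
lemma last_on_causal_past:
  assumes wf: "wf_msc M" and ne: "{f\<in>E_of M B. causal_le M f e} \<noteq> {}"
  shows "last_on M B e = Some (nth_event M B (card {f\<in>E_of M B. causal_le M f e}))"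
proof -
  obtain m where m: "m \<in> E_of M B" "causal_le M m e"
    and greatest: "\<forall>g\<in>E_of M B. causal_le M g e \<longrightarrow> loc_le M g m"
    using ex_loc_greatest[OF wf _ ne, of B] by auto
  have "{f\<in>E_of M B. causal_le M f e} = {g\<in>E_of M B. loc_le M g m}"
    using greatest causal_le_trans[OF loc_le_imp_causal_le m(2)] by blast
  then have "nth_event M B (card {f\<in>E_of M B. causal_le M f e}) = m"
    using nth_event_card_loc_downset[OF wf m(1)] by simp
  with last_on_eq_Some[OF wf m greatest] show ?thesis by simp
qed

lemma sub_refl [simp]: "\<psi> \<in> sub \<psi>"
  by (cases \<psi>) auto

lemma sub_trans: "\<theta> \<in> sub \<psi> \<Longrightarrow> sub \<theta> \<subseteq> sub \<psi>"
  by (induction \<psi>) auto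

lemma subs_sub_closed: "\<psi> \<in> subs \<Phi> \<Longrightarrow> \<theta> \<in> sub \<psi> \<Longrightarrow> \<theta> \<in> subs \<Phi>"
  unfolding subs_def using sub_trans by blast

lemma coherent_last_on:
  assumes wf: "wf_msc M" and coh: "coherent M I \<Phi> A st e"
  shows "last_on M B e = (if vc st B = 0 then None else Some (nth_event M B (vc st B)))"
proof -
  have vc: "vc st B = card {f\<in>E_of M B. causal_le M f e}"
    using coh by (simp add: coherent_def)
  show ?thesis
  proof (cases "{f\<in>E_of M B. causal_le M f e} = {}")
    case True
    with vc show ?thesis by (auto simp: last_on_def)
  next
    case False
    with vc finite_E_of[OF wf, of B] show ?thesis by (simp add: last_on_causal_past[OF wf])
  qed
qed

lemma coherent_mterm_val:
  assumes wf: "wf_msc M" and e: "e \<in> E_of M A" and coh: "coherent M I \<Phi> A st e"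
    and t: "Atom p ts \<in> subs \<Phi>" "t \<in> set ts"
  shows "mterm_val st t = term_val M e t"
proof (cases t)
  case (Loc x)
  with t have "x \<in> LVars \<Phi>" unfolding LVars_def by blast
  with Loc coh show ?thesis by (simp add: coherent_def)
next
  case (Qual B x)
  with t have x: "x \<in> QVars \<Phi>" unfolding QVars_def by blast
  show ?thesis
  proof (cases "B = A")
    case True
    with Qual x coh show ?thesis by (simp add: coherent_def last_on_self[OF wf e])
  next
    case False
    with Qual x coh show ?thesis by (simp add: coherent_def coherent_last_on[OF wf coh])
  qed
qed

lemma coherent_Eval_Atom:
  assumes "wf_msc M" and "e \<in> E_of M A" and "coherent M I \<Phi> A st e"
    and "Atom p ts \<in> subs \<Phi>"
  shows "Eval A I st oldf (Atom p ts) \<longleftrightarrow> sat M I (Atom p ts) e"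
proof -
  have "\<forall>t\<in>set ts. mterm_val st t = term_val M e t"
    using coherent_mterm_val[OF assms] by blast
  then show ?thesis by (simp cong: map_cong)
qed

lemma coherent_Eval_At:
  assumes wf: "wf_msc M" and coh: "coherent M I \<Phi> A st e"
    and "B \<noteq> A" and "\<theta> \<in> subs \<Phi>"
  shows "Eval A I st oldf (At B \<theta>) \<longleftrightarrow> sat M I (At B \<theta>) e"
  using assms by (simp add: coherent_def coherent_last_on[OF wf coh])

lemma coherent_old:
  assumes wf: "wf_msc M" and e: "e \<in> E_of M A" and "coherent M I \<Phi> A st e"
    and "\<psi> \<in> subs \<Phi>"
  shows "1 < vc st A \<and> old st \<psi> \<longleftrightarrow>
    (case last_loc M e of Some p \<Rightarrow> sat M I \<psi> p | None \<Rightarrow> False)"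
proof (cases "last_loc M e")
  case (Some p)
  then have "loc_lt M p e" using last_loc_eq_Some_iff[OF wf] by blast
  then have past: "{p, e} \<subseteq> {f\<in>E_of M A. causal_le M f e}" and "p \<noteq> e"
    using e loc_le_E_of[of M p e] loc_le_imp_causal_le[of M] causal_le_refl
    unfolding loc_lt_def E_of_def by auto
  then have "1 < card {f\<in>E_of M A. causal_le M f e}"
    using card_mono[OF _ past] finite_E_of[OF wf, of A] by simp
  with Some assms show ?thesis by (simp add: coherent_def)
qed (use assms in \<open>simp add: coherent_def\<close>)

theorem lemma1:
  fixes M :: "('e, 'l::finite, 'x, 'v) msc"
    and I :: "'p \<Rightarrow> 'v list \<Rightarrow> bool"
    and \<Phi> :: "('l, 'x, 'p) cpl set"
    and A :: 'l and e :: 'e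
    and st :: "('l, 'x, 'v, 'p) mstate"
  assumes "wf_msc M"
    and "finite \<Phi>"
    and "e \<in> E_of M A"
    and "coherent M I \<Phi> A st e"
  shows "\<forall>\<psi>\<in>subs \<Phi>. Eval A I st (old st) \<psi> \<longleftrightarrow> sat M I \<psi> e"
proof
  note wf = assms(1) and e = assms(3) and coh = assms(4)
  have e_ev: "e \<in> events M" using e by (simp add: E_of_def)
  fix \<psi> assume "\<psi> \<in> subs \<Phi>"
  then show "Eval A I st (old st) \<psi> \<longleftrightarrow> sat M I \<psi> e"
  proof (induction \<psi>)
    case (Atom p ts)
    then show ?case by (rule coherent_Eval_Atom[OF wf e coh])
  next
    case (At B \<theta>)
    then show ?case
      using subs_sub_closed[OF At.prems] coherent_Eval_At[OF wf coh] last_on_self[OF wf e]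
      by (cases "B = A") simp_all
  next
    case (Yest \<theta>)
    then show ?case using subs_sub_closed[OF Yest.prems] coherent_old[OF wf e coh] by simp
  next
    case (Since \<theta>1 \<theta>2)
    then show ?case
      using subs_sub_closed[OF Since.prems] coherent_old[OF wf e coh Since.prems]
      by (simp add: sat_Since_unfold[OF wf e_ev] del: sat.simps(4))
  next
    case (Conj \<theta>1 \<theta>2)
    then show ?case using subs_sub_closed[OF Conj.prems] by simp
  next
    case (Disj \<theta>1 \<theta>2)
    then show ?case using subs_sub_closed[OF Disj.prems] by simp
  next
    case (Neg \<theta>)
    then show ?case using subs_sub_closed[OF Neg.prems] by simp
  qed
qed

end
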